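(* Let $r\in\mathfrak{b}$ have pairwise distinct diagonal entries, let $b_{11},\dots,b_{nn}\in\mathbb{C}^*$ and $b=\sum_{\iota}E_{\iota\iota}\operatorname{diag}(b_{11},\dots,b_{nn})L^\iota(r)$. Then for every $s\in\mathfrak{b}^*$ and every $\iota$, $(bsb^{-1})_{\iota\iota}=\operatorname{tr}(L^\iota(r)s)$.
   Context: $\mathfrak{b}$: upper triangular complex $n\times n$ matrices; $\mathfrak{b}^*=\mathfrak{gl}_n/\mathfrak{n}^+$ with $\mathfrak{n}^+$ the strictly upper triangular matrices (diagonal entries of $bsb^{-1}$ and $\operatorname{tr}(L^\iota s)$ are well defined on this quotient since $b$ and $L^\iota$ are upper triangular). $E_{\iota\iota}$ is the matrix unit; $L^\iota(r)=\big[\operatorname{tr}\prod_{k\ne\iota}(r-r_{kk}I)\big]^{-1}\prod_{k\ne\iota}(r-r_{kk}I)$. The matrix $b$ is invertible upper triangular and satisfies $brb^{-1}=\operatorname{diag}(r)$. *)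

theory Defs
  imports Complex_Main "Jordan_Normal_Form.Matrix"
begin

text \<open>Matrices are n x n complex matrices of Jordan_Normal_Form, indices 0..n-1.\<close>

definition mat_trace :: "complex mat \<Rightarrow> complex" where
  "mat_trace A = (\<Sum>i<dim_row A. A $$ (i,i))"

definition mat_unit :: "nat \<Rightarrow> nat \<Rightarrow> nat \<Rightarrow> complex mat" where
  "mat_unit n i j = mat n n (\<lambda>(k,l). if k = i \<and> l = j then 1 else 0)"

definition prodL :: "nat \<Rightarrow> complex mat \<Rightarrow> complex mat" where
  "prodL \<iota> r = foldr (\<lambda>k M. (r - r $$ (k,k) \<cdot>\<^sub>m 1\<^sub>m (dim_row r)) * M)
                     (filter (\<lambda>k. k \<noteq> \<iota>) [0..<dim_row r]) (1\<^sub>m (dim_row r))"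

definition Lmat :: "nat \<Rightarrow> complex mat \<Rightarrow> complex mat" where
  "Lmat \<iota> r = inverse (mat_trace (prodL \<iota> r)) \<cdot>\<^sub>m prodL \<iota> r"

definition msum :: "nat \<Rightarrow> (nat \<Rightarrow> complex mat) \<Rightarrow> nat list \<Rightarrow> complex mat" where
  "msum n f xs = foldr (\<lambda>i M. f i + M) xs (0\<^sub>m n n)"

definition bmat :: "nat \<Rightarrow> complex mat \<Rightarrow> (nat \<Rightarrow> complex) \<Rightarrow> complex mat" where
  "bmat n r bd = msum n (\<lambda>\<iota>. mat_unit n \<iota> \<iota> * mat_diag n bd * Lmat \<iota> r) [0..<n]"

end

theory Submission
  imports Defs "Jordan_Normal_Form.Determinant"
begin

text \<open>
  Write \<open>P_\<iota> = \<Prod>_{k \<noteq> \<iota>} (r - r_kk)\<close>. For triangular \<open>r\<close> the full product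
  \<open>\<Prod>_k (r - r_kk)\<close> vanishes and the factors commute, so \<open>r P_\<iota> = r_\<iota>\<iota> P_\<iota>\<close>.
  Hence \<open>P_\<kappa> P_\<iota> = \<delta>_\<kappa>\<iota> (tr P_\<iota>) P_\<iota>\<close>: the \<open>L^\<iota>\<close> are orthogonal idempotents.
  As \<open>P_\<iota>\<close> vanishes below row \<open>\<iota>\<close> and left of column \<open>\<iota>\<close>, \<open>L^\<iota>\<close> is the rank-one
  product of its column \<open>\<iota>\<close> and its row \<open>\<iota>\<close>. Row \<open>\<iota>\<close> of \<open>b\<close> is \<open>b_\<iota>\<iota>\<close> times
  row \<open>\<iota>\<close> of \<open>L^\<iota>\<close>, so \<open>b^-1\<close> has as column \<open>\<iota>\<close> the column \<open>\<iota>\<close> of \<open>L^\<iota>\<close>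
  divided by \<open>b_\<iota>\<iota>\<close>, and \<open>(b s b^-1)_\<iota>\<iota> = (row \<iota> of L^\<iota>) s (column \<iota> of L^\<iota>) = tr (L^\<iota> s)\<close>.
\<close>

lemma index_mult_mat_sum:
  assumes "A \<in> carrier_mat n m" "B \<in> carrier_mat m p" "i < n" "j < p"
  shows "(A * B) $$ (i,j) = (\<Sum>l<m. A $$ (i,l) * B $$ (l,j))"
  using assms by (auto simp: scalar_prod_def atLeast0LessThan intro!: sum.cong)

lemma upt_split_at: "k < n \<Longrightarrow> [0..<n] = [0..<k] @ k # [Suc k..<n]"
  using upt_add_eq_append[of 0 k "n - k"] by (simp add: upt_conv_Cons)

lemma prod_list_map_eq_zero:
  "x \<in> set xs \<Longrightarrow> f x = 0 \<Longrightarrow> (\<Prod>k\<leftarrow>xs. f k) = (0 :: 'a::comm_semiring_1)"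
  by (induction xs) auto

lemma smult_one_mat [simp]: "(1 :: 'a::monoid_mult) \<cdot>\<^sub>m A = A"
  by (rule eq_matI) simp_all

lemma smult_smult_mat: "a \<cdot>\<^sub>m (b \<cdot>\<^sub>m A) = (a * b :: 'a::semigroup_mult) \<cdot>\<^sub>m A"
  by (rule eq_matI) (simp_all add: mult.assoc)

definition rows_vanish_from :: "nat \<Rightarrow> 'a::zero mat \<Rightarrow> bool" where
  "rows_vanish_from m A \<longleftrightarrow> (\<forall>i<dim_row A. \<forall>j<dim_col A. m \<le> i \<longrightarrow> A $$ (i,j) = 0)"

definition cols_vanish_below :: "nat \<Rightarrow> 'a::zero mat \<Rightarrow> bool" where
  "cols_vanish_below m A \<longleftrightarrow> (\<forall>i<dim_row A. \<forall>j<dim_col A. j < m \<longrightarrow> A $$ (i,j) = 0)"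

lemma upper_triangular_below_diag:
  "upper_triangular A \<Longrightarrow> A \<in> carrier_mat n m \<Longrightarrow> j < i \<Longrightarrow> i < n \<Longrightarrow> A $$ (i,j) = 0"
  by auto

context
  fixes A B :: "'a::semiring_0 mat" and n :: nat
  assumes A: "A \<in> carrier_mat n n" and B: "B \<in> carrier_mat n n"
begin

lemma upper_triangular_mult:
  assumes "upper_triangular A" "upper_triangular B"
  shows "upper_triangular (A * B)"
proof (rule upper_triangularI)
  fix i j assume ij: "j < i" "i < dim_row (A * B)"
  then have "i < n" "j < n" using A by auto
  moreover have "A $$ (i,l) * B $$ (l,j) = 0" if "l < n" for l
    using assms ij that A B by (cases "l < i") (auto simp: upper_triangular_below_diag)
  ultimately show "(A * B) $$ (i,j) = 0"
    by (simp add: index_mult_mat_sum[OF A B])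
qed

lemma diag_mult_upper_triangular:
  assumes "upper_triangular A" "upper_triangular B" "i < n"
  shows "(A * B) $$ (i,i) = A $$ (i,i) * B $$ (i,i)"
proof -
  have "(A * B) $$ (i,i) = (\<Sum>l<n. if l = i then A $$ (i,i) * B $$ (i,i) else 0)"
    unfolding index_mult_mat_sum[OF A B assms(3) assms(3)] using assms A B
    by (intro sum.cong refl) (auto simp: upper_triangular_below_diag linorder_neq_iff)
  then show ?thesis
    using assms(3) by simp
qed

lemma rows_vanish_from_mult:
  assumes "upper_triangular A" "rows_vanish_from m B"
  shows "rows_vanish_from m (A * B)"
  unfolding rows_vanish_from_def
proof (intro allI impI)
  fix i j assume ij: "i < dim_row (A * B)" "j < dim_col (A * B)" "m \<le> i"
  then have "i < n" "j < n" using A B by auto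
  moreover have "A $$ (i,l) * B $$ (l,j) = 0" if "l < n" for l
    using assms ij that A B unfolding rows_vanish_from_def
    by (cases "l < i") (auto simp: upper_triangular_below_diag)
  ultimately show "(A * B) $$ (i,j) = 0"
    by (simp add: index_mult_mat_sum[OF A B])
qed

lemma rows_vanish_from_mult_Suc:
  assumes "upper_triangular A" "A $$ (m,m) = 0" "rows_vanish_from (Suc m) B"
  shows "rows_vanish_from m (A * B)"
  unfolding rows_vanish_from_def
proof (intro allI impI)
  fix i j assume ij: "i < dim_row (A * B)" "j < dim_col (A * B)" "m \<le> i"
  then have "i < n" "j < n" using A B by auto
  moreover have "A $$ (i,l) * B $$ (l,j) = 0" if "l < n" for l
  proof -
    consider "l < i" | "Suc m \<le> l" | "l = m" "i = m" using ij(3) by linarith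
    then show ?thesis
      using assms ij that A B unfolding rows_vanish_from_def
      by cases (auto simp: upper_triangular_below_diag)
  qed
  ultimately show "(A * B) $$ (i,j) = 0"
    by (simp add: index_mult_mat_sum[OF A B])
qed

lemma cols_vanish_below_mult:
  assumes "cols_vanish_below m A" "upper_triangular B"
  shows "cols_vanish_below m (A * B)"
  unfolding cols_vanish_below_def
proof (intro allI impI)
  fix i j assume ij: "i < dim_row (A * B)" "j < dim_col (A * B)" "j < m"
  then have "i < n" "j < n" using A B by auto
  moreover have "A $$ (i,l) * B $$ (l,j) = 0" if "l < n" for l
    using assms ij that A B unfolding cols_vanish_below_def
    by (cases "l < m") (auto simp: upper_triangular_below_diag)
  ultimately show "(A * B) $$ (i,j) = 0"
    by (simp add: index_mult_mat_sum[OF A B])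
qed

lemma cols_vanish_below_mult_Suc:
  assumes "cols_vanish_below m A" "upper_triangular B" "B $$ (m,m) = 0"
  shows "cols_vanish_below (Suc m) (A * B)"
  unfolding cols_vanish_below_def
proof (intro allI impI)
  fix i j assume ij: "i < dim_row (A * B)" "j < dim_col (A * B)" "j < Suc m"
  then have "i < n" "j < n" using A B by auto
  moreover have "A $$ (i,l) * B $$ (l,j) = 0" if "l < n" for l
  proof -
    consider "l < m" | "j < l" | "l = m" "j = m" using ij(3) by linarith
    then show ?thesis
      using assms ij that A B unfolding cols_vanish_below_def
      by cases (auto simp: upper_triangular_below_diag)
  qed
  ultimately show "(A * B) $$ (i,j) = 0"
    by (simp add: index_mult_mat_sum[OF A B])
qed

end

definition diag_shift :: "'a::comm_ring_1 mat \<Rightarrow> nat \<Rightarrow> 'a mat" where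
  "diag_shift A k = A - A $$ (k,k) \<cdot>\<^sub>m 1\<^sub>m (dim_row A)"

definition diag_shift_prod :: "'a::comm_ring_1 mat \<Rightarrow> nat list \<Rightarrow> 'a mat" where
  "diag_shift_prod A ks = foldr (\<lambda>k M. diag_shift A k * M) ks (1\<^sub>m (dim_row A))"

definition lagrange_factor :: "'a::comm_ring_1 mat \<Rightarrow> nat \<Rightarrow> 'a mat" where
  "lagrange_factor A \<iota> = diag_shift_prod A (filter (\<lambda>k. k \<noteq> \<iota>) [0..<dim_row A])"

definition lagrange_weight :: "'a::comm_ring_1 mat \<Rightarrow> nat \<Rightarrow> 'a" where
  "lagrange_weight A \<iota> = (\<Prod>k\<leftarrow>filter (\<lambda>k. k \<noteq> \<iota>) [0..<dim_row A]. A $$ (\<iota>,\<iota>) - A $$ (k,k))"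

context
  fixes A :: "'a::comm_ring_1 mat" and n :: nat
  assumes A: "A \<in> carrier_mat n n"
begin

declare carrier_matD[OF A, simp]

lemma diag_shift_carrier_mat [simp]: "diag_shift A k \<in> carrier_mat n n"
  using A by (simp add: diag_shift_def minus_carrier_mat)

lemma dim_diag_shift [simp]: "dim_row (diag_shift A k) = n" "dim_col (diag_shift A k) = n"
  using diag_shift_carrier_mat by (blast dest: carrier_matD)+

lemma index_diag_shift:
  "i < n \<Longrightarrow> j < n \<Longrightarrow> diag_shift A k $$ (i,j) = A $$ (i,j) - (if i = j then A $$ (k,k) else 0)"
  using A by (simp add: diag_shift_def)

lemma diag_shift_mult:
  assumes "M \<in> carrier_mat n n"
  shows "diag_shift A k * M = A * M - A $$ (k,k) \<cdot>\<^sub>m M"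
  using A assms by (simp add: diag_shift_def minus_mult_distrib_mat[of _ n n] mult_smult_assoc_mat[of _ n n])

lemma diag_shift_commute:
  assumes M: "M \<in> carrier_mat n n" and "A * M = M * A"
  shows "diag_shift A k * M = M * diag_shift A k"
proof -
  have "M * diag_shift A k = M * A - A $$ (k,k) \<cdot>\<^sub>m M"
    using A M by (simp add: diag_shift_def mult_minus_distrib_mat[of _ n n] mult_smult_distrib[of _ n n _ n])
  then show ?thesis
    using M assms(2) by (simp add: diag_shift_mult)
qed

lemma diag_shift_prod_Nil [simp]: "diag_shift_prod A [] = 1\<^sub>m n"
  using A by (simp add: diag_shift_prod_def)

lemma diag_shift_prod_Cons [simp]: "diag_shift_prod A (k # ks) = diag_shift A k * diag_shift_prod A ks"
  by (simp add: diag_shift_prod_def)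

lemma diag_shift_prod_carrier_mat [simp]: "diag_shift_prod A ks \<in> carrier_mat n n"
  by (induction ks) (auto intro: mult_carrier_mat[of _ n n])

lemma dim_diag_shift_prod [simp]:
  "dim_row (diag_shift_prod A ks) = n" "dim_col (diag_shift_prod A ks) = n"
  using diag_shift_prod_carrier_mat by (blast dest: carrier_matD)+

lemma diag_shift_prod_append:
  "diag_shift_prod A (ks @ ls) = diag_shift_prod A ks * diag_shift_prod A ls"
  by (induction ks) (simp_all add: assoc_mult_mat[of _ n n _ n _ n])

lemma diag_shift_prod_commute: "A * diag_shift_prod A ks = diag_shift_prod A ks * A"
proof (induction ks)
  case (Cons k ks)
  have "A * diag_shift_prod A (k # ks) = (A * diag_shift A k) * diag_shift_prod A ks"
    using A by (simp add: assoc_mult_mat[of _ n n _ n _ n])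
  also have "\<dots> = (diag_shift A k * A) * diag_shift_prod A ks"
    using diag_shift_commute[OF A refl] by simp
  also have "\<dots> = diag_shift A k * (A * diag_shift_prod A ks)"
    using A by (simp add: assoc_mult_mat[of _ n n _ n _ n])
  also have "\<dots> = diag_shift_prod A (k # ks) * A"
    using A by (simp add: Cons.IH assoc_mult_mat[of _ n n _ n _ n])
  finally show ?case .
qed (use A in simp)

lemma lagrange_factor_carrier_mat [simp]: "lagrange_factor A \<iota> \<in> carrier_mat n n"
  by (simp add: lagrange_factor_def)

lemma dim_lagrange_factor [simp]:
  "dim_row (lagrange_factor A \<iota>) = n" "dim_col (lagrange_factor A \<iota>) = n"
  by (simp_all add: lagrange_factor_def)

lemma lagrange_factor_split:
  assumes "\<iota> < n"
  shows "lagrange_factor A \<iota> = diag_shift_prod A [0..<\<iota>] * diag_shift_prod A [Suc \<iota>..<n]"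
proof -
  have "filter (\<lambda>k. k \<noteq> \<iota>) [0..<n] = [0..<\<iota>] @ [Suc \<iota>..<n]"
    by (subst upt_split_at[OF assms]) (auto simp: filter_id_conv)
  then show ?thesis
    by (simp add: lagrange_factor_def diag_shift_prod_append)
qed

lemma diag_shift_commute_prod: "diag_shift A k * diag_shift_prod A ks = diag_shift_prod A ks * diag_shift A k"
  by (rule diag_shift_commute[OF diag_shift_prod_carrier_mat diag_shift_prod_commute])

context
  assumes A_upper: "upper_triangular A"
begin

lemma upper_triangular_diag_shift: "upper_triangular (diag_shift A k)"
  using A A_upper by (intro upper_triangularI) (auto simp: index_diag_shift upper_triangular_below_diag)

lemma upper_triangular_diag_shift_prod: "upper_triangular (diag_shift_prod A ks)"
  by (induction ks) (auto intro: upper_triangular_mult[of _ n] upper_triangular_diag_shift)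

lemma diag_diag_shift_prod:
  "j < n \<Longrightarrow> diag_shift_prod A ks $$ (j,j) = (\<Prod>k\<leftarrow>ks. A $$ (j,j) - A $$ (k,k))"
proof (induction ks)
  case (Cons k ks)
  then show ?case
    by (simp add: diag_mult_upper_triangular[OF diag_shift_carrier_mat diag_shift_prod_carrier_mat]
        upper_triangular_diag_shift upper_triangular_diag_shift_prod index_diag_shift del: index_mult_mat)
qed (use A in simp)

lemma diag_shift_prod_upt_rows_vanish: "m \<le> n \<Longrightarrow> rows_vanish_from m (diag_shift_prod A [m..<n])"
proof (induction m rule: inc_induct)
  case base
  show ?case by (simp add: rows_vanish_from_def)
next
  case (step m)
  then show ?case
    by (simp add: upt_conv_Cons rows_vanish_from_mult_Suc[of _ n] upper_triangular_diag_shift index_diag_shift)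
qed

lemma diag_shift_prod_upt_cols_vanish: "m \<le> n \<Longrightarrow> cols_vanish_below m (diag_shift_prod A [0..<m])"
proof (induction m)
  case 0
  show ?case by (simp add: cols_vanish_below_def)
next
  case (Suc m)
  have "diag_shift_prod A [0..<Suc m] = diag_shift_prod A [0..<m] * diag_shift A m"
    using A by (simp add: diag_shift_prod_append)
  then show ?case
    using Suc by (simp add: cols_vanish_below_mult_Suc[of _ n] upper_triangular_diag_shift index_diag_shift)
qed

lemma diag_shift_prod_all: "diag_shift_prod A [0..<n] = 0\<^sub>m n n"
  using diag_shift_prod_upt_rows_vanish[of 0] by (auto simp: rows_vanish_from_def)

lemma diag_shift_mult_lagrange_factor_self:
  assumes "\<iota> < n"
  shows "diag_shift A \<iota> * lagrange_factor A \<iota> = 0\<^sub>m n n"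
proof -
  let ?L = "diag_shift_prod A [0..<\<iota>]" and ?R = "diag_shift_prod A [Suc \<iota>..<n]"
  have "0\<^sub>m n n = ?L * (diag_shift A \<iota> * ?R)"
    using diag_shift_prod_all by (simp add: upt_split_at[OF assms] diag_shift_prod_append)
  also have "\<dots> = (?L * diag_shift A \<iota>) * ?R"
    by (simp add: assoc_mult_mat[of _ n n _ n _ n])
  also have "\<dots> = (diag_shift A \<iota> * ?L) * ?R"
    by (simp only: diag_shift_commute_prod)
  also have "\<dots> = diag_shift A \<iota> * lagrange_factor A \<iota>"
    by (simp add: lagrange_factor_split[OF assms] assoc_mult_mat[of _ n n _ n _ n])
  finally show ?thesis ..
qed

lemma diag_shift_mult_lagrange_factor:
  assumes "\<iota> < n"
  shows "diag_shift A k * lagrange_factor A \<iota> = (A $$ (\<iota>,\<iota>) - A $$ (k,k)) \<cdot>\<^sub>m lagrange_factor A \<iota>"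
proof (rule eq_matI)
  let ?P = "lagrange_factor A \<iota>"
  fix i j assume "i < dim_row ((A $$ (\<iota>,\<iota>) - A $$ (k,k)) \<cdot>\<^sub>m ?P)"
    "j < dim_col ((A $$ (\<iota>,\<iota>) - A $$ (k,k)) \<cdot>\<^sub>m ?P)"
  then have ij: "i < n" "j < n" by simp_all
  have "(A * ?P) $$ (i,j) - A $$ (\<iota>,\<iota>) * ?P $$ (i,j) = 0"
    using arg_cong[OF diag_shift_mult_lagrange_factor_self[OF assms], of "\<lambda>M. M $$ (i,j)"] ij
    by (simp add: diag_shift_mult del: index_mult_mat)
  then show "(diag_shift A k * ?P) $$ (i,j) = ((A $$ (\<iota>,\<iota>) - A $$ (k,k)) \<cdot>\<^sub>m ?P) $$ (i,j)"
    using ij by (simp add: diag_shift_mult algebra_simps del: index_mult_mat)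
qed simp_all

lemma diag_shift_prod_mult_lagrange_factor:
  assumes "\<iota> < n"
  shows "diag_shift_prod A ks * lagrange_factor A \<iota>
    = (\<Prod>k\<leftarrow>ks. A $$ (\<iota>,\<iota>) - A $$ (k,k)) \<cdot>\<^sub>m lagrange_factor A \<iota>"
proof (induction ks)
  case (Cons k ks)
  have "diag_shift_prod A (k # ks) * lagrange_factor A \<iota>
      = diag_shift A k * (diag_shift_prod A ks * lagrange_factor A \<iota>)"
    by (simp add: assoc_mult_mat[of _ n n _ n _ n])
  also have "\<dots> = (\<Prod>k\<leftarrow>ks. A $$ (\<iota>,\<iota>) - A $$ (k,k)) \<cdot>\<^sub>m (diag_shift A k * lagrange_factor A \<iota>)"
    by (simp add: Cons.IH mult_smult_distrib[of _ n n _ n])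
  also have "\<dots> = (\<Prod>k\<leftarrow>k # ks. A $$ (\<iota>,\<iota>) - A $$ (k,k)) \<cdot>\<^sub>m lagrange_factor A \<iota>"
    by (simp add: diag_shift_mult_lagrange_factor[OF assms] smult_smult_mat mult.commute)
  finally show ?case .
qed simp

lemma lagrange_factor_mult:
  assumes "\<kappa> < n" "\<iota> < n"
  shows "lagrange_factor A \<kappa> * lagrange_factor A \<iota>
    = (if \<kappa> = \<iota> then lagrange_weight A \<iota> \<cdot>\<^sub>m lagrange_factor A \<iota> else 0\<^sub>m n n)"
proof -
  have "lagrange_factor A \<kappa> * lagrange_factor A \<iota>
      = (\<Prod>k\<leftarrow>filter (\<lambda>k. k \<noteq> \<kappa>) [0..<n]. A $$ (\<iota>,\<iota>) - A $$ (k,k)) \<cdot>\<^sub>m lagrange_factor A \<iota>"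
    unfolding lagrange_factor_def[of _ \<kappa>] using diag_shift_prod_mult_lagrange_factor[OF assms(2)] by simp
  moreover have "(\<Prod>k\<leftarrow>filter (\<lambda>k. k \<noteq> \<kappa>) [0..<n]. A $$ (\<iota>,\<iota>) - A $$ (k,k)) = 0" if "\<kappa> \<noteq> \<iota>"
    using that assms by (intro prod_list_map_eq_zero[of \<iota>]) auto
  ultimately show ?thesis
    by (auto simp: lagrange_weight_def intro: eq_matI)
qed

lemma lagrange_factor_diag:
  assumes "\<iota> < n" "j < n"
  shows "lagrange_factor A \<iota> $$ (j,j) = (if j = \<iota> then lagrange_weight A \<iota> else 0)"
  using assms unfolding lagrange_factor_def lagrange_weight_def
  by (auto simp: diag_diag_shift_prod intro: prod_list_map_eq_zero[of j])

lemma lagrange_factor_rows_vanish: "\<iota> < n \<Longrightarrow> rows_vanish_from (Suc \<iota>) (lagrange_factor A \<iota>)"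
  by (simp add: lagrange_factor_split rows_vanish_from_mult[of _ n]
      upper_triangular_diag_shift_prod diag_shift_prod_upt_rows_vanish)

lemma lagrange_factor_cols_vanish: "\<iota> < n \<Longrightarrow> cols_vanish_below \<iota> (lagrange_factor A \<iota>)"
  by (simp add: lagrange_factor_split cols_vanish_below_mult[of _ n]
      upper_triangular_diag_shift_prod diag_shift_prod_upt_cols_vanish)

end
end

lemma prodL_eq_lagrange_factor: "prodL \<iota> r = lagrange_factor r \<iota>"
  by (simp add: prodL_def lagrange_factor_def diag_shift_prod_def diag_shift_def)

lemma Lmat_eq: "Lmat \<iota> r = inverse (mat_trace (lagrange_factor r \<iota>)) \<cdot>\<^sub>m lagrange_factor r \<iota>"
  by (simp add: Lmat_def prodL_eq_lagrange_factor)

lemma Lmat_carrier_mat: "r \<in> carrier_mat n n \<Longrightarrow> Lmat \<iota> r \<in> carrier_mat n n"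
  by (simp add: Lmat_eq)

lemma msum_carrier_mat: "\<forall>x\<in>set xs. f x \<in> carrier_mat n n \<Longrightarrow> msum n f xs \<in> carrier_mat n n"
  by (induction xs) (auto simp: msum_def)

lemma index_msum:
  "\<forall>x\<in>set xs. f x \<in> carrier_mat n n \<Longrightarrow> i < n \<Longrightarrow> j < n \<Longrightarrow>
   msum n f xs $$ (i,j) = (\<Sum>x\<leftarrow>xs. f x $$ (i,j))"
proof (induction xs)
  case (Cons x xs)
  then show ?case
    using msum_carrier_mat[of xs f n] by (simp add: msum_def)
qed (simp add: msum_def)

lemma index_mat_unit_mult:
  assumes "M \<in> carrier_mat n p" "x < n" "i < n" "j < p"
  shows "(mat_unit n x x * M) $$ (i,j) = (if i = x then M $$ (x,j) else 0)"
proof -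
  have "(mat_unit n x x * M) $$ (i,j) = (\<Sum>l<n. (if i = x \<and> l = x then 1 else 0) * M $$ (l,j))"
    using assms by (simp add: index_mult_mat_sum[of _ n n] mat_unit_def del: index_mult_mat)
  also have "\<dots> = (\<Sum>l<n. if l = x then (if i = x then M $$ (x,j) else 0) else 0)"
    by (rule sum.cong) auto
  finally show ?thesis
    using assms(2) by simp
qed

definition bmat_inverse :: "nat \<Rightarrow> complex mat \<Rightarrow> (nat \<Rightarrow> complex) \<Rightarrow> complex mat" where
  "bmat_inverse n r bd = mat n n (\<lambda>(i,j). Lmat j r $$ (i,j) / bd j)"

lemma bmat_inverse_carrier_mat: "bmat_inverse n r bd \<in> carrier_mat n n"
  by (simp add: bmat_inverse_def)

context
  fixes r :: "complex mat" and n :: nat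
  assumes r: "r \<in> carrier_mat n n"
begin

lemma bmat_carrier_mat: "bmat n r bd \<in> carrier_mat n n"
  unfolding bmat_def
  by (rule msum_carrier_mat) (auto intro!: mult_carrier_mat[of _ n n _ n] Lmat_carrier_mat[OF r] simp: mat_unit_def)

lemma index_bmat:
  assumes "i < n" "j < n"
  shows "bmat n r bd $$ (i,j) = bd i * Lmat i r $$ (i,j)"
proof -
  have summand: "(mat_unit n x x * mat_diag n bd * Lmat x r) $$ (i,j)
      = (if x = i then bd i * Lmat i r $$ (i,j) else 0)" if "x < n" for x
  proof -
    have "mat_unit n x x * mat_diag n bd * Lmat x r = mat_unit n x x * (mat_diag n bd * Lmat x r)"
      using Lmat_carrier_mat[OF r] by (simp add: mat_unit_def assoc_mult_mat[of _ n n _ n _ n])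
    then show ?thesis
      using that assms Lmat_carrier_mat[OF r]
      by (auto simp: index_mat_unit_mult[of _ n n] mat_diag_mult_left[of _ n n])
  qed
  have "bmat n r bd $$ (i,j) = (\<Sum>x\<leftarrow>[0..<n]. (mat_unit n x x * mat_diag n bd * Lmat x r) $$ (i,j))"
    unfolding bmat_def using assms Lmat_carrier_mat[OF r]
    by (intro index_msum) (auto simp: mat_unit_def intro!: mult_carrier_mat[of _ n n _ n])
  also have "\<dots> = (\<Sum>x\<leftarrow>[0..<n]. if x = i then bd i * Lmat i r $$ (i,j) else 0)"
    by (intro arg_cong[where f=sum_list] map_cong refl summand) simp
  also have "\<dots> = bd i * Lmat i r $$ (i,j)"
    using assms by (simp add: interv_sum_list_conv_sum_set_nat atLeast0LessThan)
  finally show ?thesis .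
qed

context
  assumes r_upper: "upper_triangular r"
begin

lemma mat_trace_lagrange_factor: "\<iota> < n \<Longrightarrow> mat_trace (lagrange_factor r \<iota>) = lagrange_weight r \<iota>"
  using r r_upper by (simp add: mat_trace_def lagrange_factor_diag)

context
  assumes r_distinct: "\<forall>i<n. \<forall>j<n. i \<noteq> j \<longrightarrow> r $$ (i,i) \<noteq> r $$ (j,j)"
begin

lemma lagrange_weight_nonzero: "\<iota> < n \<Longrightarrow> lagrange_weight r \<iota> \<noteq> 0"
  using r r_distinct by (auto simp: lagrange_weight_def prod_list_zero_iff)

lemma Lmat_mult:
  assumes "\<kappa> < n" "\<iota> < n"
  shows "Lmat \<kappa> r * Lmat \<iota> r = (if \<kappa> = \<iota> then Lmat \<iota> r else 0\<^sub>m n n)"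
  using assms r r_upper lagrange_weight_nonzero[OF assms(2)]
  by (simp add: Lmat_eq mat_trace_lagrange_factor lagrange_factor_mult mult_smult_distrib[of _ n n _ n]
      mult_smult_assoc_mat[of _ n n _ n] smult_smult_mat mult.assoc)

lemma Lmat_diag_self: "\<iota> < n \<Longrightarrow> Lmat \<iota> r $$ (\<iota>,\<iota>) = 1"
  using r r_upper lagrange_weight_nonzero
  by (simp add: Lmat_eq mat_trace_lagrange_factor lagrange_factor_diag)

text \<open>In \<open>L = L L\<close> only the middle index \<open>\<iota>\<close> survives, because \<open>L\<close> vanishes
  left of column \<open>\<iota>\<close> and below row \<open>\<iota>\<close>.\<close>
lemma Lmat_rank_one:
  assumes "\<iota> < n" "i < n" "j < n"
  shows "Lmat \<iota> r $$ (i,j) = Lmat \<iota> r $$ (i,\<iota>) * Lmat \<iota> r $$ (\<iota>,j)"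
proof -
  let ?L = "Lmat \<iota> r"
  have vanish: "?L $$ (i,l) * ?L $$ (l,j) = (if l = \<iota> then ?L $$ (i,\<iota>) * ?L $$ (\<iota>,j) else 0)"
    if "l < n" for l
    using that assms r r_upper lagrange_factor_rows_vanish[OF r r_upper assms(1)]
      lagrange_factor_cols_vanish[OF r r_upper assms(1)]
    by (auto simp: Lmat_eq rows_vanish_from_def cols_vanish_below_def linorder_neq_iff)
  have "?L $$ (i,j) = (?L * ?L) $$ (i,j)"
    using Lmat_mult[OF assms(1) assms(1)] by simp
  also have "\<dots> = (\<Sum>l<n. if l = \<iota> then ?L $$ (i,\<iota>) * ?L $$ (\<iota>,j) else 0)"
    unfolding index_mult_mat_sum[OF Lmat_carrier_mat[OF r] Lmat_carrier_mat[OF r] assms(2,3)]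
    by (rule sum.cong[OF refl vanish]) simp
  also have "\<dots> = ?L $$ (i,\<iota>) * ?L $$ (\<iota>,j)"
    using assms(1) by simp
  finally show ?thesis .
qed

lemma bmat_mult_bmat_inverse:
  assumes bd: "\<forall>i<n. bd i \<noteq> 0"
  shows "bmat n r bd * bmat_inverse n r bd = 1\<^sub>m n"
proof (rule eq_matI)
  fix i j assume "i < dim_row (1\<^sub>m n :: complex mat)" "j < dim_col (1\<^sub>m n :: complex mat)"
  then have ij: "i < n" "j < n" by simp_all
  have "(bmat n r bd * bmat_inverse n r bd) $$ (i,j)
      = bd i / bd j * (\<Sum>l<n. Lmat i r $$ (i,l) * Lmat j r $$ (l,j))"
    unfolding index_mult_mat_sum[OF bmat_carrier_mat bmat_inverse_carrier_mat ij]
    using ij by (simp add: index_bmat bmat_inverse_def sum_distrib_left algebra_simps)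
  also have "\<dots> = (Lmat i r * Lmat j r) $$ (i,j) * bd i / bd j"
    using ij by (simp add: index_mult_mat_sum[OF Lmat_carrier_mat[OF r] Lmat_carrier_mat[OF r]] del: index_mult_mat)
  also have "\<dots> = (1\<^sub>m n :: complex mat) $$ (i,j)"
    using ij bd by (simp add: Lmat_mult Lmat_diag_self)
  finally show "(bmat n r bd * bmat_inverse n r bd) $$ (i,j) = (1\<^sub>m n :: complex mat) $$ (i,j)" .
qed (simp_all add: bmat_carrier_mat[THEN carrier_matD(1)] bmat_inverse_carrier_mat[THEN carrier_matD(2)])

lemma bmat_conj_diag_eq_trace:
  assumes bd: "\<forall>i<n. bd i \<noteq> 0" and s: "s \<in> carrier_mat n n" and \<iota>: "\<iota> < n"
  shows "(bmat n r bd * s * bmat_inverse n r bd) $$ (\<iota>,\<iota>) = mat_trace (Lmat \<iota> r * s)"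
proof -
  let ?L = "Lmat \<iota> r"
  have "(bmat n r bd * s * bmat_inverse n r bd) $$ (\<iota>,\<iota>)
      = (\<Sum>l<n. (\<Sum>k<n. bd \<iota> * ?L $$ (\<iota>,k) * s $$ (k,l)) * (?L $$ (l,\<iota>) / bd \<iota>))"
    unfolding index_mult_mat_sum[OF mult_carrier_mat[OF bmat_carrier_mat s] bmat_inverse_carrier_mat \<iota> \<iota>]
    using \<iota> s by (simp add: index_mult_mat_sum[OF bmat_carrier_mat s] index_bmat bmat_inverse_def del: index_mult_mat)
  also have "\<dots> = (\<Sum>l<n. \<Sum>k<n. ?L $$ (l,\<iota>) * ?L $$ (\<iota>,k) * s $$ (k,l))"
    using bd \<iota> by (intro sum.cong refl) (simp add: mult.assoc flip: sum_distrib_left)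
  also have "\<dots> = (\<Sum>l<n. \<Sum>k<n. ?L $$ (l,k) * s $$ (k,l))"
    using \<iota> by (intro sum.cong refl) (simp add: Lmat_rank_one[symmetric])
  also have "\<dots> = (\<Sum>l<n. (?L * s) $$ (l,l))"
    by (intro sum.cong refl index_mult_mat_sum[symmetric, OF Lmat_carrier_mat[OF r] s]) simp_all
  also have "\<dots> = mat_trace (?L * s)"
    by (simp add: mat_trace_def carrier_matD(1)[OF Lmat_carrier_mat[OF r]])
  finally show ?thesis .
qed

end
end
end

theorem mainTheorem17:
  fixes n :: nat and r s :: "complex mat" and bd :: "nat \<Rightarrow> complex" and \<iota> :: nat
  assumes r_carrier: "r \<in> carrier_mat n n"
    and r_upper: "upper_triangular r"
    and r_distinct: "\<forall>i<n. \<forall>j<n. i \<noteq> j \<longrightarrow> r $$ (i,i) \<noteq> r $$ (j,j)"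
    and bd_nonzero: "\<forall>i<n. bd i \<noteq> 0"
    and s_carrier: "s \<in> carrier_mat n n"
    and iota: "\<iota> < n"
  shows "invertible_mat (bmat n r bd) \<and>
    (\<forall>binv \<in> carrier_mat n n. bmat n r bd * binv = 1\<^sub>m n \<longrightarrow>
       (bmat n r bd * s * binv) $$ (\<iota>,\<iota>) = mat_trace (Lmat \<iota> r * s))"
proof -
  let ?b = "bmat n r bd" and ?V = "bmat_inverse n r bd"
  have b: "?b \<in> carrier_mat n n" and V: "?V \<in> carrier_mat n n"
    by (rule bmat_carrier_mat[OF r_carrier], rule bmat_inverse_carrier_mat)
  have bV: "?b * ?V = 1\<^sub>m n"
    by (rule bmat_mult_bmat_inverse[OF r_carrier r_upper r_distinct bd_nonzero])
  have Vb: "?V * ?b = 1\<^sub>m n"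
    by (rule mat_mult_left_right_inverse[OF b V bV])
  have "binv = ?V" if "binv \<in> carrier_mat n n" "?b * binv = 1\<^sub>m n" for binv
    using that V by (metis Vb assoc_mult_mat[OF V b] left_mult_one_mat right_mult_one_mat)
  moreover have "invertible_mat ?b"
    using b bV Vb carrier_matD[OF V] by (auto simp: invertible_mat_def inverts_mat_def)
  ultimately show ?thesis
    using bmat_conj_diag_eq_trace[OF r_carrier r_upper r_distinct bd_nonzero s_carrier iota] by auto
qed

end
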